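(* Let $c\in\mathbb{R}$, $T>0$ and $f\in B^2_{c,T}$. Then $f\in C^\infty(\mathbb{R}^+)$ and for every $k=0,1,2,\ldots$ $$\lim_{x\to 0^+} x^c\,\Theta_c^k f(x)=\lim_{x\to+\infty} x^c\,\Theta_c^k f(x)=0 .$$
   Context: $\mathbb{R}^+=(0,\infty)$. For $c\in\mathbb{R}$, $X^2_c$ is the space of measurable $f:\mathbb{R}^+\to\mathbb{C}$ with $f(x)x^{c-1/2}\in L^2(\mathbb{R}^+)$, normed by $\|f\|_{X^2_c}=\big(\int_0^\infty |f(u)|^2u^{2c-1}\,du\big)^{1/2}$. For $f\in X^2_c$ the Mellin transform $[f]^\wedge_{M^2}(c+it)$, $t\in\mathbb{R}$, is the $L^2(\mathbb{R})$-limit (in the variable $t$) as $\rho\to\infty$ of $\int_{1/\rho}^{\rho} f(u)u^{c+it-1}\,du$. $B^2_{c,T}$ is the set of $f\in X^2_c\cap C(\mathbb{R}^+)$ such that $[f]^\wedge_{M^2}(c+it)=0$ for almost every $|t|>T$. The Mellin derivative is $\Theta_c f(x)=xf'(x)+cf(x)$, with $\Theta_c^0 f=f$ and $\Theta_c^r=\Theta_c(\Theta_c^{r-1})$. *)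

theory Defs
  imports "HOL-Analysis.Analysis"
begin

definition X2 :: "real \<Rightarrow> (real \<Rightarrow> complex) \<Rightarrow> bool" where
  "X2 c f \<longleftrightarrow> set_borel_measurable lebesgue {0<..} f \<and>
     set_integrable lebesgue {0<..} (\<lambda>u. (cmod (f u))\<^sup>2 * u powr (2 * c - 1))"

definition mellin_trunc :: "real \<Rightarrow> (real \<Rightarrow> complex) \<Rightarrow> real \<Rightarrow> real \<Rightarrow> complex" where
  "mellin_trunc c f \<rho> t =
     (LBINT u=1/\<rho>..\<rho>. f u * (complex_of_real u) powr (complex_of_real c + \<i> * complex_of_real t - 1))"

text \<open>g is (a representative of) the L^2-Mellin transform [f]^_{M^2}(c+it), as a function of t:
  the L^2(R)-limit of the truncated integrals as rho tends to infinity.\<close>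
definition is_mellin_L2 :: "real \<Rightarrow> (real \<Rightarrow> complex) \<Rightarrow> (real \<Rightarrow> complex) \<Rightarrow> bool" where
  "is_mellin_L2 c f g \<longleftrightarrow>
     g \<in> borel_measurable lborel \<and>
     integrable lborel (\<lambda>t. (cmod (g t))\<^sup>2) \<and>
     ((\<lambda>\<rho>. \<integral>\<^sup>+ t. ennreal ((cmod (mellin_trunc c f \<rho> t - g t))\<^sup>2) \<partial>lborel) \<longlongrightarrow> 0) at_top"

definition B2 :: "real \<Rightarrow> real \<Rightarrow> (real \<Rightarrow> complex) \<Rightarrow> bool" where
  "B2 c T f \<longleftrightarrow> X2 c f \<and> continuous_on {0<..} f \<and>
     (\<exists>g. is_mellin_L2 c f g \<and> (AE t in lborel. \<bar>t\<bar> > T \<longrightarrow> g t = 0))"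

definition mellin_deriv :: "real \<Rightarrow> (real \<Rightarrow> complex) \<Rightarrow> real \<Rightarrow> complex" where
  "mellin_deriv c f = (\<lambda>x. complex_of_real x * vector_derivative f (at x) + complex_of_real c * f x)"

definition higher_vderiv :: "nat \<Rightarrow> (real \<Rightarrow> complex) \<Rightarrow> real \<Rightarrow> complex" where
  "higher_vderiv k f = ((\<lambda>g x. vector_derivative g (at x)) ^^ k) f"

definition smooth_on :: "real set \<Rightarrow> (real \<Rightarrow> complex) \<Rightarrow> bool" where
  "smooth_on S f \<longleftrightarrow> (\<forall>k. \<forall>x\<in>S. higher_vderiv k f differentiable (at x))"

end

theory Submission
  imports Defs "HOL-Probability.Probability"
begin

text \<open>Substitute \<open>x = e\<^sup>v\<close>. Then \<open>F(v) = e\<^sup>c\<^sup>v f(e\<^sup>v)\<close> lies in \<open>L\<^sup>2(\<real>)\<close>, and its truncated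
  Fourier transforms are the truncated Mellin integrals of \<open>f\<close>; they converge in \<open>L\<^sup>2\<close> to \<open>g\<close>,
  which vanishes outside \<open>[-T, T]\<close>. Pairing with Gaussians whose width tends to zero yields
  the inversion formula \<open>F = \<Psi>\<^sub>0 / 2\<pi>\<close>, where \<open>\<Psi>\<^sub>m(v) = \<integral> (-it)\<^sup>m g(t) e\<^sup>-\<^sup>i\<^sup>t\<^sup>v dt\<close>.
  Since \<open>\<Psi>\<^sub>m' = \<Psi>\<^sub>m\<^sub>+\<^sub>1\<close>, this makes \<open>f\<close> smooth and gives
  \<open>x\<^sup>c \<Theta>\<^sub>c\<^sup>k f(x) = \<Psi>\<^sub>k(ln x) / 2\<pi>\<close>. Finally \<open>\<Psi>\<^sub>0\<close> is square integrable and Lipschitz,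
  hence vanishes at \<open>\<plusminus>\<infinity>\<close>; and a function vanishing at infinity whose second derivative is
  bounded has vanishing derivative, so every \<open>\<Psi>\<^sub>k\<close> vanishes at \<open>\<plusminus>\<infinity>\<close>.\<close>

section \<open>Decay at infinity\<close>

lemma tendsto_integral_indicator_atLeast_zero:
  fixes h :: "real \<Rightarrow> real"
  assumes h: "integrable lborel h"
  shows "((\<lambda>R. \<integral>v. indicator {R..} v * h v \<partial>lborel) \<longlongrightarrow> 0) at_top"
proof -
  have "((\<lambda>R. \<integral>v. indicator {R..} v * h v \<partial>lborel) \<longlongrightarrow> integral\<^sup>L lborel (\<lambda>v::real. 0::real)) at_top"
  proof (rule integral_dominated_convergence_at_top[where w="\<lambda>v. \<bar>h v\<bar>"])
    show "AE v in lborel. ((\<lambda>R. indicator {R..} v * h v) \<longlongrightarrow> 0) at_top"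
    proof (rule AE_I2, rule tendsto_eventually)
      show "\<forall>\<^sub>F R in at_top. indicator {R..} v * h v = (0::real)" for v :: real
        using eventually_gt_at_top[of v] by eventually_elim (auto simp: indicator_def)
    qed
    show "\<forall>\<^sub>F R in at_top. AE v in lborel. norm (indicator {R..} v * h v) \<le> \<bar>h v\<bar>"
      by (intro always_eventually allI AE_I2) (auto simp: indicator_def)
  qed (use h in \<open>auto dest: borel_measurable_integrable\<close>)
  then show ?thesis by simp
qed

lemma tendsto_zero_at_top_if_square_integrable_Lipschitz:
  fixes P :: "real \<Rightarrow> 'a::real_normed_vector"
  assumes L2: "integrable lborel (\<lambda>v. (norm (P v))\<^sup>2)"
    and lip: "\<And>v d. \<bar>d\<bar> \<le> 1 \<Longrightarrow> norm (P (v + d) - P v) \<le> C * \<bar>d\<bar>"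
  shows "(P \<longlongrightarrow> 0) at_top"
proof (rule tendstoI)
  fix e :: real assume e: "e > 0"
  have [measurable]: "(\<lambda>v. (norm (P v))\<^sup>2) \<in> borel_measurable lborel"
    using L2 by (rule borel_measurable_integrable)
  define S where "S R = (\<integral>v. indicator {R..} v * (norm (P v))\<^sup>2 \<partial>lborel)" for R
  have S_lim: "(S \<longlongrightarrow> 0) at_top"
    unfolding S_def using L2 by (rule tendsto_integral_indicator_atLeast_zero)
  define \<delta> where "\<delta> = min 1 (e / (2 * (\<bar>C\<bar> + 1)))"
  have \<delta>: "\<delta> > 0" "\<delta> \<le> 1" "\<bar>C\<bar> * \<delta> \<le> e / 2"
    using e by (auto simp: \<delta>_def field_simps min_def)
  have "\<forall>\<^sub>F R in at_top. S R < \<delta> * (e/2)\<^sup>2"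
    using S_lim \<delta> e by (simp add: order_tendstoD)
  then obtain R0 where R0: "\<And>R. R \<ge> R0 \<Longrightarrow> S R < \<delta> * (e/2)\<^sup>2"
    by (auto simp: eventually_at_top_linorder)
  show "\<forall>\<^sub>F v in at_top. dist (P v) 0 < e"
    unfolding eventually_at_top_linorder
  proof (intro exI[of _ R0] allI impI)
    fix v assume v: "v \<ge> R0"
    show "dist (P v) 0 < e"
    proof (rule ccontr)
      assume "\<not> dist (P v) 0 < e"
      then have Pv: "norm (P v) \<ge> e" by simp
      \<comment> \<open>A large value at \<open>v\<close> stays large on \<open>[v, v + \<delta>]\<close>, which carries too much \<open>L\<^sup>2\<close> mass.\<close>
      have large: "indicator {v..v+\<delta>} w * (e/2)\<^sup>2 \<le> indicator {v..} w * (norm (P w))\<^sup>2" for w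
      proof (cases "w \<in> {v..v+\<delta>}")
        case True
        have "norm (P w - P v) \<le> C * \<bar>w - v\<bar>"
          using lip[of "w - v" v] True \<delta> by simp
        also have "\<dots> \<le> \<bar>C\<bar> * \<delta>"
          using True by (intro mult_mono) auto
        finally have "norm (P w - P v) \<le> e/2" using \<delta> by simp
        then have "e/2 \<le> norm (P w)"
          using Pv norm_triangle_ineq2[of "P v" "P w"] by (simp add: norm_minus_commute)
        then have "(e/2)\<^sup>2 \<le> (norm (P w))\<^sup>2" using e by (intro power_mono) auto
        then show ?thesis using True by simp
      qed (auto simp: indicator_def)
      have "\<delta> * (e/2)\<^sup>2 = (\<integral>w. indicator {v..v+\<delta>} w * (e/2)\<^sup>2 \<partial>lborel)"
        using \<delta> by simp
      also have "\<dots> \<le> S v"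
        unfolding S_def
      proof (rule integral_mono[OF _ _ large])
        show "integrable lborel (\<lambda>w. indicator {v..v+\<delta>} w * (e/2)\<^sup>2)"
          by (intro integrable_mult_left integrable_real_indicator) (auto simp: emeasure_lborel_Icc_eq)
        show "integrable lborel (\<lambda>w. indicator {v..} w * (norm (P w))\<^sup>2)"
          by (rule Bochner_Integration.integrable_bound[OF L2]) (auto simp: indicator_def)
      qed
      finally show False using R0[OF v] by simp
    qed
  qed
qed

lemma tendsto_zero_at_bot_if_square_integrable_Lipschitz:
  fixes P :: "real \<Rightarrow> 'a::real_normed_vector"
  assumes L2: "integrable lborel (\<lambda>v. (norm (P v))\<^sup>2)"
    and lip: "\<And>v d. \<bar>d\<bar> \<le> 1 \<Longrightarrow> norm (P (v + d) - P v) \<le> C * \<bar>d\<bar>"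
  shows "(P \<longlongrightarrow> 0) at_bot"
proof -
  have "((\<lambda>v. P (- v)) \<longlongrightarrow> 0) at_top"
  proof (rule tendsto_zero_at_top_if_square_integrable_Lipschitz)
    show "integrable lborel (\<lambda>v. (norm (P (- v)))\<^sup>2)"
      using lborel_integrable_real_affine_iff[of "-1" "\<lambda>v. (norm (P v))\<^sup>2" 0] L2 by simp
    show "norm (P (- (v + d)) - P (- v)) \<le> C * \<bar>d\<bar>" if "\<bar>d\<bar> \<le> 1" for v d
      using lip[of "- d" "- v"] that by simp
  qed
  then show ?thesis by (simp add: filterlim_at_bot_mirror)
qed

lemma has_vector_derivative_if_second_order_bound:
  fixes P :: "real \<Rightarrow> 'a::real_normed_vector"
  assumes bound: "\<And>d. norm (P (v + d) - P v - d *\<^sub>R D) \<le> K * d\<^sup>2"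
  shows "(P has_vector_derivative D) (at v)"
  unfolding has_vector_derivative_def has_derivative_at
proof
  show "(\<lambda>d. norm (P (v + d) - P v - d *\<^sub>R D) / norm d) \<midarrow>0\<rightarrow> 0"
  proof (rule Lim_null_comparison)
    have "norm (P (v + d) - P v - d *\<^sub>R D) / norm d \<le> \<bar>d\<bar> * K" for d
    proof (cases "d = 0")
      case False
      have "K * d\<^sup>2 = \<bar>d\<bar> * K * norm d"
        by (simp add: power2_eq_square abs_mult_self_eq mult.commute mult.left_commute)
      with bound[of d] have "norm (P (v + d) - P v - d *\<^sub>R D) \<le> \<bar>d\<bar> * K * norm d"
        by simp
      with False show ?thesis by (simp add: divide_le_eq)
    qed simp
    then show "\<forall>\<^sub>F d in at 0. norm (norm (P (v + d) - P v - d *\<^sub>R D) / norm d) \<le> \<bar>d\<bar> * K"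
      by (simp add: always_eventually)
    show "((\<lambda>d. \<bar>d\<bar> * K) \<longlongrightarrow> 0) (at 0)"
      by (rule tendsto_eq_intros refl | simp)+
  qed
qed (rule bounded_linear_scaleR_left)

lemma Lipschitz_if_second_order_bound:
  fixes P P' :: "real \<Rightarrow> 'a::real_normed_vector"
  assumes second_order: "\<And>v d. norm (P (v + d) - P v - d *\<^sub>R P' v) \<le> K * d\<^sup>2"
    and bounded: "\<And>v. norm (P' v) \<le> B" and d: "\<bar>d\<bar> \<le> 1"
  shows "norm (P (v + d) - P v) \<le> (B + K) * \<bar>d\<bar>"
proof -
  have K: "K \<ge> 0" using order_trans[OF norm_ge_zero second_order[of 0 1]] by simp
  have "\<bar>d\<bar> * \<bar>d\<bar> \<le> \<bar>d\<bar> * 1" using d by (intro mult_left_mono) auto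
  then have "d\<^sup>2 \<le> \<bar>d\<bar>" by (simp add: power2_eq_square)
  then have "K * d\<^sup>2 \<le> K * \<bar>d\<bar>" using K by (rule mult_left_mono)
  moreover have "norm (d *\<^sub>R P' v) \<le> \<bar>d\<bar> * B"
    using bounded[of v] by (simp add: mult_left_mono)
  moreover have "norm (P (v + d) - P v) \<le> norm (P (v + d) - P v - d *\<^sub>R P' v) + norm (d *\<^sub>R P' v)"
    using norm_triangle_sub[of "P (v + d) - P v" "d *\<^sub>R P' v"] by simp
  ultimately show ?thesis using second_order[of v d] by (simp add: algebra_simps)
qed

text \<open>Divided differences of step \<open>d\<close> approximate \<open>P'\<close> up to \<open>K d\<close>, and those of a
  vanishing function vanish.\<close>

lemma tendsto_zero_derivative_if_second_order_bound:
  fixes P P' :: "real \<Rightarrow> 'a::real_normed_vector"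
  assumes lim: "(P \<longlongrightarrow> 0) F" and shift: "\<And>d. filterlim (\<lambda>v. v + d) F F"
    and second_order: "\<And>v d. norm (P (v + d) - P v - d *\<^sub>R P' v) \<le> K * d\<^sup>2"
  shows "(P' \<longlongrightarrow> 0) F"
proof (rule tendstoI)
  fix e :: real assume e: "e > 0"
  have K: "K \<ge> 0" using order_trans[OF norm_ge_zero second_order[of 0 1]] by simp
  define d where "d = e / (2 * (K + 1))"
  have d: "d > 0" using e K by (simp add: d_def)
  have dK: "d * K < e / 2"
  proof -
    have "d * K = e/2 * (K / (K + 1))" using K by (simp add: d_def field_simps)
    also have "\<dots> < e/2 * 1" using K e by (intro mult_strict_left_mono) auto
    finally show ?thesis by simp
  qed
  have "\<forall>\<^sub>F v in F. norm (P v) < e * d / 4"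
    using tendstoD[OF lim, of "e * d / 4"] e d by (simp add: dist_norm)
  moreover have "\<forall>\<^sub>F v in F. norm (P (v + d)) < e * d / 4"
    using tendstoD[OF filterlim_compose[OF lim shift], of "e * d / 4"] e d by (simp add: dist_norm)
  ultimately show "\<forall>\<^sub>F v in F. dist (P' v) 0 < e"
  proof eventually_elim
    case (elim v)
    have "d * norm (P' v) = norm (d *\<^sub>R P' v)" using d by simp
    also have "\<dots> \<le> norm (P (v + d) - P v) + norm (P (v + d) - P v - d *\<^sub>R P' v)"
      using norm_triangle_ineq4[of "P (v + d) - P v" "P (v + d) - P v - d *\<^sub>R P' v"] by simp
    also have "\<dots> \<le> norm (P (v + d)) + norm (P v) + K * d\<^sup>2"
      using norm_triangle_ineq4[of "P (v + d)" "P v"] second_order[of v d] by linarith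
    also have "\<dots> < d * e"
      using elim mult_strict_left_mono[OF dK d] by (simp add: power2_eq_square algebra_simps)
    finally show ?case using d by (simp add: mult_less_cancel_left_pos)
  qed
qed

section \<open>Gaussian kernels\<close>

lemma integrable_gaussian:
  fixes e :: real
  assumes "e \<noteq> 0"
  shows "integrable lborel (\<lambda>t. exp (- ((e * t)\<^sup>2) / 2))"
proof -
  have "integrable lborel (\<lambda>t. sqrt (2 * pi) * std_normal_density (0 + e * t))"
    using lborel_integrable_real_affine_iff[OF assms, of std_normal_density 0] by simp
  then show ?thesis by (simp add: std_normal_density_def)
qed

lemma fourier_transform_gaussian:
  fixes e s :: real
  assumes e: "e > 0"
  shows "(\<integral>t. of_real (exp (- ((e * t)\<^sup>2) / 2)) * iexp (t * s) \<partial>lborel)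
    = of_real (2 * pi * normal_density 0 e s)"
proof -
  have "of_real (exp (- ((s / e)\<^sup>2) / 2)) = char std_normal_distribution (s / e)"
    by (simp add: char_std_normal_distribution)
  also have "\<dots> = (\<integral>x. std_normal_density x *\<^sub>R iexp (s / e * x) \<partial>lborel)"
    unfolding char_def by (subst integral_density) (auto simp: normal_density_nonneg)
  also have "\<dots> = \<bar>e\<bar> *\<^sub>R (\<integral>t. std_normal_density (0 + e * t) *\<^sub>R iexp (s / e * (0 + e * t)) \<partial>lborel)"
    using e by (intro lborel_integral_real_affine) simp
  also have "(\<lambda>t. std_normal_density (0 + e * t) *\<^sub>R iexp (s / e * (0 + e * t))) =
     (\<lambda>t. (1 / sqrt (2 * pi)) *\<^sub>R (of_real (exp (- ((e * t)\<^sup>2) / 2)) * iexp (t * s)))"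
    using e by (auto simp: std_normal_density_def scaleR_conv_of_real fun_eq_iff algebra_simps)
  finally have "of_real (exp (- ((s / e)\<^sup>2) / 2))
      = e * (1 / sqrt (2 * pi)) * (\<integral>t. of_real (exp (- ((e * t)\<^sup>2) / 2)) * iexp (t * s) \<partial>lborel)"
    using e by (simp add: scaleR_conv_of_real del: of_real_mult)
  then have "(\<integral>t. of_real (exp (- ((e * t)\<^sup>2) / 2)) * iexp (t * s) \<partial>lborel)
      = of_real (sqrt (2 * pi) / e * exp (- ((s / e)\<^sup>2) / 2))"
    using e by (simp add: field_simps)
  also have "sqrt (2 * pi) / e * exp (- ((s / e)\<^sup>2) / 2) = 2 * pi * normal_density 0 e s"
  proof -
    have "sqrt (2 * pi * e\<^sup>2) = sqrt (2 * pi) * e" using e by (simp add: real_sqrt_mult)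
    moreover have "sqrt (2 * pi) * sqrt (2 * pi) = 2 * pi" by simp
    ultimately show ?thesis using e by (simp add: normal_density_def power_divide field_simps)
  qed
  finally show ?thesis .
qed

definition gauss_wave :: "real \<Rightarrow> real \<Rightarrow> real \<Rightarrow> complex" where
  "gauss_wave e v0 t = iexp (- (t * v0)) * of_real (exp (- ((e * t)\<^sup>2) / 2))"

lemma measurable_gauss_wave [measurable]: "gauss_wave e v0 \<in> borel_measurable borel"
  unfolding gauss_wave_def by measurable

lemma norm_gauss_wave: "norm (gauss_wave e v0 t) = exp (- ((e * t)\<^sup>2) / 2)"
  by (simp add: gauss_wave_def norm_mult norm_exp)

lemma square_integrable_gauss_wave:
  assumes "e > 0"
  shows "integrable lborel (\<lambda>t. (norm (gauss_wave e v0 t))\<^sup>2)"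
proof (rule Bochner_Integration.integrable_bound[OF integrable_gaussian[of e]])
  have "(exp (- ((e * t)\<^sup>2) / 2))\<^sup>2 \<le> exp (- ((e * t)\<^sup>2) / 2)" for t
    by (simp add: power2_eq_square mult_le_one)
  then show "AE t in lborel. norm ((norm (gauss_wave e v0 t))\<^sup>2) \<le> norm (exp (- ((e * t)\<^sup>2) / 2))"
    by (simp add: norm_gauss_wave)
qed (use assms in auto)

lemma integral_iexp_gauss_wave:
  assumes e: "e > 0"
  shows "(\<integral>t. iexp (t * v) * gauss_wave e v0 t \<partial>lborel) = of_real (2 * pi * normal_density v0 e v)"
proof -
  have "iexp (t * v) * gauss_wave e v0 t = of_real (exp (- ((e * t)\<^sup>2) / 2)) * iexp (t * (v - v0))" for t
  proof -
    have "iexp (t * v) * iexp (- (t * v0)) = iexp (t * (v - v0))"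
      by (simp add: exp_add[symmetric] algebra_simps)
    then show ?thesis unfolding gauss_wave_def by (simp add: algebra_simps)
  qed
  then have "(\<integral>t. iexp (t * v) * gauss_wave e v0 t \<partial>lborel)
      = (\<integral>t. of_real (exp (- ((e * t)\<^sup>2) / 2)) * iexp (t * (v - v0)) \<partial>lborel)"
    by simp
  also have "\<dots> = of_real (2 * pi * normal_density 0 e (v - v0))"
    by (rule fourier_transform_gaussian[OF e])
  also have "normal_density 0 e (v - v0) = normal_density v0 e v"
    by (simp add: normal_density_def)
  finally show ?thesis .
qed

lemma normal_density_le_peak:
  assumes "e > 0"
  shows "normal_density v0 e v \<le> 1 / sqrt (2 * pi * e\<^sup>2)"
  using assms unfolding normal_density_def by (intro mult_left_le) auto

lemma normal_density_le_tail:
  assumes e: "e > 0" and \<delta>: "\<delta> > 0" and far: "\<delta> \<le> \<bar>v - v0\<bar>"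
  shows "normal_density v0 e v \<le> 2 * e / \<delta>\<^sup>2"
proof -
  have "\<delta>\<^sup>2 \<le> (v - v0)\<^sup>2" using far \<delta> by (simp add: abs_le_square_iff[symmetric])
  then have "exp (- (v - v0)\<^sup>2 / (2 * e\<^sup>2)) \<le> exp (- \<delta>\<^sup>2 / (2 * e\<^sup>2))"
    using e by (simp add: divide_right_mono)
  also have "\<dots> \<le> 2 * e\<^sup>2 / \<delta>\<^sup>2"
  proof -
    have "\<delta>\<^sup>2 / (2 * e\<^sup>2) \<le> exp (\<delta>\<^sup>2 / (2 * e\<^sup>2))"
      using exp_ge_add_one_self[of "\<delta>\<^sup>2 / (2 * e\<^sup>2)"] by linarith
    then show ?thesis using e \<delta> by (simp add: exp_minus field_simps)
  qed
  finally have "exp (- (v - v0)\<^sup>2 / (2 * e\<^sup>2)) \<le> 2 * e\<^sup>2 / \<delta>\<^sup>2" .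
  moreover have "1 / sqrt (2 * pi * e\<^sup>2) \<le> 1 / e"
  proof -
    have "sqrt (2 * pi * e\<^sup>2) = sqrt (2 * pi) * e" using e by (simp add: real_sqrt_mult)
    moreover have "1 \<le> sqrt (2 * pi)" using pi_gt3 by simp
    ultimately show ?thesis using e by (simp add: divide_left_mono mult_le_cancel_right1)
  qed
  ultimately have "normal_density v0 e v \<le> 1 / e * (2 * e\<^sup>2 / \<delta>\<^sup>2)"
    unfolding normal_density_def using e by (intro mult_mono) auto
  also have "\<dots> = 2 * e / \<delta>\<^sup>2" using e by (simp add: power2_eq_square field_simps)
  finally show ?thesis .
qed

lemma integrable_mult_normal_density:
  fixes F :: "real \<Rightarrow> complex"
  assumes [measurable]: "F \<in> borel_measurable borel"
    and L2: "integrable lborel (\<lambda>v. (norm (F v))\<^sup>2)" and e: "e > 0"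
  shows "integrable lborel (\<lambda>v. F v * of_real (normal_density v0 e v))"
proof -
  define M where "M = 1 / sqrt (2 * pi * e\<^sup>2)"
  show ?thesis
  proof (rule Bochner_Integration.integrable_bound[of _ "\<lambda>v. ((norm (F v))\<^sup>2 + M * normal_density v0 e v) / 2"])
    show "integrable lborel (\<lambda>v. ((norm (F v))\<^sup>2 + M * normal_density v0 e v) / 2)"
      using L2 e by (intro integrable_divide Bochner_Integration.integrable_add integrable_mult_right integrable_normal_density) auto
    show "AE v in lborel. norm (F v * of_real (normal_density v0 e v)) \<le> norm (((norm (F v))\<^sup>2 + M * normal_density v0 e v) / 2)"
    proof (rule AE_I2)
      fix v
      let ?a = "norm (F v)" and ?b = "normal_density v0 e v"
      have "?b * ?b \<le> M * ?b"
        using mult_right_mono[OF normal_density_le_peak[OF e, of v0 v]] by (simp add: M_def)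
      then have "2 * ?a * ?b \<le> ?a\<^sup>2 + M * ?b"
        using sum_squares_bound[of ?a ?b] by (simp add: power2_eq_square)
      moreover have "0 \<le> M * ?b" by (simp add: M_def)
      ultimately show "norm (F v * of_real ?b) \<le> norm ((?a\<^sup>2 + M * ?b) / 2)"
        by (simp add: norm_mult)
    qed
  qed measurable
qed

lemma normal_density_weighted_diff_le:
  fixes F :: "real \<Rightarrow> complex"
  assumes e: "e > 0" and \<delta>: "\<delta> > 0" and \<eta>: "\<eta> \<ge> 0"
    and near: "\<bar>v - v0\<bar> < \<delta> \<Longrightarrow> norm (F v - F v0) \<le> \<eta>"
  shows "norm (F v - F v0) * normal_density v0 e v \<le>
    \<eta> * normal_density v0 e v + e / \<delta>\<^sup>2 * (norm (F v))\<^sup>2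
    + (1/2 + norm (F v0)) / \<delta>\<^sup>2 * (normal_density v0 e v * (v - v0)\<^sup>2)"
proof -
  let ?n = "normal_density v0 e v"
  let ?far = "e / \<delta>\<^sup>2 * (norm (F v))\<^sup>2 + (1/2 + norm (F v0)) / \<delta>\<^sup>2 * (?n * (v - v0)\<^sup>2)"
  have "norm (F v - F v0) * ?n \<le> \<eta> * ?n + ?far"
  proof (cases "\<bar>v - v0\<bar> < \<delta>")
    case True
    have "norm (F v - F v0) * ?n \<le> \<eta> * ?n" using near[OF True] by (simp add: mult_right_mono)
    moreover have "0 \<le> ?far"
      using e by (intro add_nonneg_nonneg mult_nonneg_nonneg divide_nonneg_nonneg) auto
    ultimately show ?thesis by linarith
  next
    case False
    have "norm (F v - F v0) \<le> norm (F v) + norm (F v0)" by (rule norm_triangle_ineq4)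
    also have "\<dots> \<le> (norm (F v))\<^sup>2 / 2 + (1/2 + norm (F v0))"
      using sum_squares_bound[of "norm (F v)" 1] by simp
    finally have "norm (F v - F v0) * ?n \<le> ((norm (F v))\<^sup>2 / 2 + (1/2 + norm (F v0))) * ?n"
      by (rule mult_right_mono) simp
    also have "\<dots> = (norm (F v))\<^sup>2 / 2 * ?n + (1/2 + norm (F v0)) * ?n"
      by (rule distrib_right)
    also have "\<dots> \<le> (norm (F v))\<^sup>2 / 2 * (2 * e / \<delta>\<^sup>2) + (1/2 + norm (F v0)) * (?n * (v - v0)\<^sup>2 / \<delta>\<^sup>2)"
    proof (intro add_mono mult_left_mono)
      show "?n \<le> 2 * e / \<delta>\<^sup>2" using False by (intro normal_density_le_tail[OF e \<delta>]) simp
      have "\<delta>\<^sup>2 \<le> (v - v0)\<^sup>2" using False \<delta> by (simp add: abs_le_square_iff[symmetric])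
      then have "1 \<le> (v - v0)\<^sup>2 / \<delta>\<^sup>2" using \<delta> by simp
      then show "?n \<le> ?n * (v - v0)\<^sup>2 / \<delta>\<^sup>2"
        using mult_left_mono[of 1 "(v - v0)\<^sup>2 / \<delta>\<^sup>2" ?n] by simp
    qed auto
    also have "\<dots> \<le> \<eta> * ?n + ?far" using \<eta> by (simp add: algebra_simps)
    finally show ?thesis .
  qed
  then show ?thesis by (simp add: add.assoc)
qed

lemma norm_normal_density_average_diff_le:
  fixes F :: "real \<Rightarrow> complex"
  assumes F [measurable]: "F \<in> borel_measurable borel"
    and L2: "integrable lborel (\<lambda>v. (norm (F v))\<^sup>2)"
    and e: "e > 0" and \<delta>: "\<delta> > 0" and \<eta>: "\<eta> \<ge> 0"
    and near: "\<And>v. \<bar>v - v0\<bar> < \<delta> \<Longrightarrow> norm (F v - F v0) \<le> \<eta>"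
  shows "norm ((\<integral>v. F v * of_real (normal_density v0 e v) \<partial>lborel) - F v0)
    \<le> \<eta> + e / \<delta>\<^sup>2 * (\<integral>v. (norm (F v))\<^sup>2 \<partial>lborel) + (1/2 + norm (F v0)) / \<delta>\<^sup>2 * e\<^sup>2"
proof -
  let ?n = "normal_density v0 e"
  have i_n: "integrable lborel ?n" using e by (rule integrable_normal_density)
  have i_moment: "integrable lborel (\<lambda>v. ?n v * (v - v0)\<^sup>2)"
    using integrable_normal_moment[of e v0 2] e by simp
  have moment: "(\<integral>v. ?n v * (v - v0)\<^sup>2 \<partial>lborel) = e\<^sup>2"
    using integral_normal_moment_even[of e v0 1] e by (simp add: power2_eq_square)
  have i_F: "integrable lborel (\<lambda>v. F v * of_real (?n v))"
    by (rule integrable_mult_normal_density[OF F L2 e])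
  have i_c: "integrable lborel (\<lambda>v. F v0 * of_real (?n v))" using i_n by simp
  have "(\<integral>v. F v0 * of_real (?n v) \<partial>lborel) = F v0"
    using integral_normal_density[OF e, of v0] by simp
  moreover have "(\<integral>v. (F v - F v0) * of_real (?n v) \<partial>lborel)
      = (\<integral>v. F v * of_real (?n v) \<partial>lborel) - (\<integral>v. F v0 * of_real (?n v) \<partial>lborel)"
    by (subst Bochner_Integration.integral_diff[OF i_F i_c, symmetric]) (simp add: algebra_simps)
  ultimately have "(\<integral>v. F v * of_real (?n v) \<partial>lborel) - F v0
      = (\<integral>v. (F v - F v0) * of_real (?n v) \<partial>lborel)"
    by simp
  also have "norm \<dots> \<le> (\<integral>v. norm ((F v - F v0) * of_real (?n v)) \<partial>lborel)"
    by (rule integral_norm_bound)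
  also have "\<dots> \<le> (\<integral>v. \<eta> * ?n v + e / \<delta>\<^sup>2 * (norm (F v))\<^sup>2
      + (1/2 + norm (F v0)) / \<delta>\<^sup>2 * (?n v * (v - v0)\<^sup>2) \<partial>lborel)"
  proof (rule integral_mono)
    show "integrable lborel (\<lambda>v. norm ((F v - F v0) * of_real (?n v)))"
      using Bochner_Integration.integrable_diff[OF i_F i_c] by (simp add: algebra_simps)
    show "integrable lborel (\<lambda>v. \<eta> * ?n v + e / \<delta>\<^sup>2 * (norm (F v))\<^sup>2
        + (1/2 + norm (F v0)) / \<delta>\<^sup>2 * (?n v * (v - v0)\<^sup>2))"
      using i_n i_moment L2 by (intro Bochner_Integration.integrable_add integrable_mult_right) auto
    show "norm ((F v - F v0) * of_real (?n v)) \<le> \<eta> * ?n v + e / \<delta>\<^sup>2 * (norm (F v))\<^sup>2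
        + (1/2 + norm (F v0)) / \<delta>\<^sup>2 * (?n v * (v - v0)\<^sup>2)" for v
      using normal_density_weighted_diff_le[OF e \<delta> \<eta> near[of v]]
      by (simp add: norm_mult)
  qed
  also have "\<dots> = \<eta> + e / \<delta>\<^sup>2 * (\<integral>v. (norm (F v))\<^sup>2 \<partial>lborel) + (1/2 + norm (F v0)) / \<delta>\<^sup>2 * e\<^sup>2"
    using i_n i_moment L2 integral_normal_density[OF e, of v0] moment
    by (simp add: Bochner_Integration.integral_add integrable_mult_right)
  finally show ?thesis .
qed

lemma tendsto_normal_density_average:
  fixes F :: "real \<Rightarrow> complex"
  assumes F [measurable]: "F \<in> borel_measurable borel"
    and L2: "integrable lborel (\<lambda>v. (norm (F v))\<^sup>2)" and cont: "isCont F v0"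
  shows "((\<lambda>e. \<integral>v. F v * of_real (normal_density v0 e v) \<partial>lborel) \<longlongrightarrow> F v0) (at_right 0)"
proof (rule tendstoI)
  fix \<eta> :: real assume \<eta>: "\<eta> > 0"
  obtain \<delta> where \<delta>: "\<delta> > 0" and near: "\<And>v. \<bar>v - v0\<bar> < \<delta> \<Longrightarrow> norm (F v - F v0) \<le> \<eta> / 2"
    using cont \<eta> unfolding continuous_at_eps_delta dist_norm
    by (metis half_gt_zero less_eq_real_def real_norm_def)
  define Q where "Q = (\<integral>v. (norm (F v))\<^sup>2 \<partial>lborel)"
  define b where "b e = \<eta> / 2 + e / \<delta>\<^sup>2 * Q + (1/2 + norm (F v0)) / \<delta>\<^sup>2 * e\<^sup>2" for e
  have "(b \<longlongrightarrow> b 0) (at_right 0)"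
    unfolding b_def using \<delta> by (intro tendsto_intros) auto
  then have "\<forall>\<^sub>F e in at_right 0. b e < \<eta>"
    by (rule order_tendstoD(2)) (use \<eta> in \<open>simp add: b_def\<close>)
  then show "\<forall>\<^sub>F e in at_right 0. dist (\<integral>v. F v * of_real (normal_density v0 e v) \<partial>lborel) (F v0) < \<eta>"
    using eventually_at_right_less[of 0]
  proof eventually_elim
    case (elim e)
    with norm_normal_density_average_diff_le[OF F L2 _ \<delta> _ near, of e] \<eta>
    show ?case by (simp add: dist_norm b_def Q_def)
  qed
qed

lemma Cauchy_Schwarz_integral_mult:
  fixes u \<phi> :: "'a \<Rightarrow> complex"
  assumes [measurable]: "u \<in> borel_measurable M" "\<phi> \<in> borel_measurable M"
    and int: "integrable M (\<lambda>t. u t * \<phi> t)"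
  shows "(ennreal (norm (\<integral>t. u t * \<phi> t \<partial>M)))\<^sup>2
    \<le> (\<integral>\<^sup>+t. ennreal ((norm (u t))\<^sup>2) \<partial>M) * (\<integral>\<^sup>+t. ennreal ((norm (\<phi> t))\<^sup>2) \<partial>M)"
proof -
  have "ennreal (norm (\<integral>t. u t * \<phi> t \<partial>M)) \<le> (\<integral>\<^sup>+t. ennreal (norm (u t * \<phi> t)) \<partial>M)"
    using int by (rule integral_norm_bound_ennreal)
  also have "\<dots> = (\<integral>\<^sup>+t. ennreal (norm (u t)) * ennreal (norm (\<phi> t)) \<partial>M)"
    by (simp add: norm_mult ennreal_mult)
  finally have "(ennreal (norm (\<integral>t. u t * \<phi> t \<partial>M)))\<^sup>2
      \<le> (\<integral>\<^sup>+t. ennreal (norm (u t)) * ennreal (norm (\<phi> t)) \<partial>M)\<^sup>2"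
    by (rule power_mono) simp
  also have "\<dots> \<le> (\<integral>\<^sup>+t. (ennreal (norm (u t)))\<^sup>2 \<partial>M) * (\<integral>\<^sup>+t. (ennreal (norm (\<phi> t)))\<^sup>2 \<partial>M)"
    by (rule Cauchy_Schwarz_nn_integral) measurable
  finally show ?thesis by (simp add: ennreal_power)
qed

lemma tendsto_integral_mult_if_L2_convergence:
  fixes u :: "'i \<Rightarrow> 'a \<Rightarrow> complex" and g \<phi> :: "'a \<Rightarrow> complex"
  assumes L2_conv: "((\<lambda>L. \<integral>\<^sup>+t. ennreal ((norm (u L t - g t))\<^sup>2) \<partial>M) \<longlongrightarrow> 0) F"
    and [measurable]: "\<And>L. u L \<in> borel_measurable M" "g \<in> borel_measurable M"
      "\<phi> \<in> borel_measurable M"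
    and \<phi>: "integrable M (\<lambda>t. (norm (\<phi> t))\<^sup>2)"
    and int_u: "\<And>L. integrable M (\<lambda>t. u L t * \<phi> t)" and int_g: "integrable M (\<lambda>t. g t * \<phi> t)"
  shows "((\<lambda>L. \<integral>t. u L t * \<phi> t \<partial>M) \<longlongrightarrow> (\<integral>t. g t * \<phi> t \<partial>M)) F"
proof -
  define B where "B = (\<integral>\<^sup>+t. ennreal ((norm (\<phi> t))\<^sup>2) \<partial>M)"
  have B_fin: "B < top"
    using integrableD(2)[OF \<phi>] by (simp add: B_def top.not_eq_extremum)
  define D where "D L = (\<integral>t. u L t * \<phi> t \<partial>M) - (\<integral>t. g t * \<phi> t \<partial>M)" for L
  have bound: "(ennreal (norm (D L)))\<^sup>2 \<le> (\<integral>\<^sup>+t. ennreal ((norm (u L t - g t))\<^sup>2) \<partial>M) * B" for L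
  proof -
    have "D L = (\<integral>t. (u L t - g t) * \<phi> t \<partial>M)"
      unfolding D_def using Bochner_Integration.integral_diff[OF int_u int_g] by (simp add: algebra_simps)
    moreover have "integrable M (\<lambda>t. (u L t - g t) * \<phi> t)"
      using Bochner_Integration.integrable_diff[OF int_u int_g] by (simp add: algebra_simps)
    ultimately show ?thesis
      unfolding B_def by (simp add: Cauchy_Schwarz_integral_mult)
  qed
  have "((\<lambda>L. (ennreal (norm (D L)))\<^sup>2) \<longlongrightarrow> 0) F"
  proof (rule tendsto_sandwich[of "\<lambda>_. 0" _ _ "\<lambda>L. B * (\<integral>\<^sup>+t. ennreal ((norm (u L t - g t))\<^sup>2) \<partial>M)"])
    show "((\<lambda>L. B * (\<integral>\<^sup>+t. ennreal ((norm (u L t - g t))\<^sup>2) \<partial>M)) \<longlongrightarrow> 0) F"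
      using ennreal_tendsto_cmult[OF B_fin L2_conv] by simp
  qed (use bound in \<open>auto simp: mult.commute\<close>)
  then have "((\<lambda>L. ennreal ((norm (D L))\<^sup>2)) \<longlongrightarrow> 0) F"
    by (simp add: ennreal_power)
  then have "((\<lambda>L. (norm (D L))\<^sup>2) \<longlongrightarrow> 0) F"
    using tendsto_ennreal_iff[of "\<lambda>L. (norm (D L))\<^sup>2" F 0] by simp
  then have "((\<lambda>L. sqrt ((norm (D L))\<^sup>2)) \<longlongrightarrow> sqrt 0) F"
    by (rule tendsto_real_sqrt)
  then have "(D \<longlongrightarrow> 0) F" by (simp add: tendsto_norm_zero_iff)
  then show ?thesis unfolding D_def by (simp add: LIM_zero_iff)
qed

section \<open>Fourier transforms of compactly supported integrable functions\<close>

lemma iexp_second_order: "norm (iexp x - 1 - \<i> * of_real x) \<le> x\<^sup>2 / 2"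
  using iexp_approx1[of x 1] by (simp add: power2_eq_square algebra_simps)

locale compactly_supported_integrable =
  fixes G :: "real \<Rightarrow> complex" and T :: real
  assumes integrable: "integrable lborel G"
    and support: "\<And>t. T < \<bar>t\<bar> \<Longrightarrow> G t = 0"
    and nonneg: "0 \<le> T"
begin

definition moment :: "nat \<Rightarrow> real \<Rightarrow> complex" where
  "moment m t = (- (\<i> * of_real t)) ^ m * G t"

definition fourier_deriv :: "nat \<Rightarrow> real \<Rightarrow> complex" where
  "fourier_deriv m v = (\<integral>t. moment m t * iexp (- (t * v)) \<partial>lborel)"

definition L1_norm :: real where
  "L1_norm = (\<integral>t. norm (G t) \<partial>lborel)"

lemma measurable_G [measurable]: "G \<in> borel_measurable borel"
  using integrable by (simp add: borel_measurable_integrable)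

lemma measurable_moment [measurable]: "moment m \<in> borel_measurable borel"
  unfolding moment_def by measurable

lemma norm_moment_le: "norm (moment m t) \<le> T ^ m * norm (G t)"
proof (cases "T < \<bar>t\<bar>")
  case True then show ?thesis by (simp add: support moment_def)
next
  case False
  then have "norm (- (\<i> * of_real t)) ^ m \<le> T ^ m"
    by (intro power_mono) (auto simp: norm_mult)
  then show ?thesis unfolding moment_def norm_mult norm_power
    by (intro mult_right_mono) auto
qed

lemma integrable_moment_iexp: "integrable lborel (\<lambda>t. moment m t * iexp (- (t * v)))"
proof (rule Bochner_Integration.integrable_bound[of _ "\<lambda>t. T ^ m * norm (G t)"])
  show "AE t in lborel. norm (moment m t * iexp (- (t * v))) \<le> norm (T ^ m * norm (G t))"
    using norm_moment_le[of m] nonneg by (auto simp: norm_mult)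
qed (use integrable in auto)

lemma norm_fourier_deriv_le: "norm (fourier_deriv m v) \<le> T ^ m * L1_norm"
proof -
  have "norm (fourier_deriv m v) \<le> (\<integral>t. norm (moment m t * iexp (- (t * v))) \<partial>lborel)"
    unfolding fourier_deriv_def by (rule integral_norm_bound)
  also have "\<dots> \<le> (\<integral>t. T ^ m * norm (G t) \<partial>lborel)"
    by (intro integral_mono integrable_moment_iexp[THEN integrable_norm])
       (use integrable norm_moment_le in \<open>auto simp: norm_mult\<close>)
  also have "\<dots> = T ^ m * L1_norm" by (simp add: L1_norm_def)
  finally show ?thesis .
qed

lemma fourier_deriv_remainder_eq:
  "fourier_deriv m (v + d) - fourier_deriv m v - d *\<^sub>R fourier_deriv (Suc m) v
    = (\<integral>t. moment m t * iexp (- (t * v)) * (iexp (- (t * d)) - 1 - \<i> * of_real (- (t * d))) \<partial>lborel)"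
proof -
  note i = integrable_moment_iexp[of m "v + d"] integrable_moment_iexp[of m v]
    integrable_moment_iexp[of "Suc m" v]
  have "(\<integral>t. moment m t * iexp (- (t * (v + d))) - moment m t * iexp (- (t * v))
         - of_real d * (moment (Suc m) t * iexp (- (t * v))) \<partial>lborel)
    = (\<integral>t. moment m t * iexp (- (t * (v + d))) - moment m t * iexp (- (t * v)) \<partial>lborel)
      - (\<integral>t. of_real d * (moment (Suc m) t * iexp (- (t * v))) \<partial>lborel)"
    using i by (intro Bochner_Integration.integral_diff Bochner_Integration.integrable_diff
        Bochner_Integration.integrable_mult_right)
  then have "fourier_deriv m (v + d) - fourier_deriv m v - d *\<^sub>R fourier_deriv (Suc m) v
      = (\<integral>t. moment m t * iexp (- (t * (v + d))) - moment m t * iexp (- (t * v))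
           - of_real d * (moment (Suc m) t * iexp (- (t * v))) \<partial>lborel)"
    unfolding fourier_deriv_def scaleR_conv_of_real Bochner_Integration.integral_diff[OF i(1,2)]
    by simp
  also have "\<dots> = (\<integral>t. moment m t * iexp (- (t * v))
      * (iexp (- (t * d)) - 1 - \<i> * of_real (- (t * d))) \<partial>lborel)"
  proof (rule Bochner_Integration.integral_cong[OF refl])
    fix t
    have "iexp (- (t * (v + d))) = iexp (- (t * v)) * iexp (- (t * d))"
      by (simp add: algebra_simps exp_add[symmetric])
    then show "moment m t * iexp (- (t * (v + d))) - moment m t * iexp (- (t * v))
        - of_real d * (moment (Suc m) t * iexp (- (t * v)))
        = moment m t * iexp (- (t * v)) * (iexp (- (t * d)) - 1 - \<i> * of_real (- (t * d)))"
      by (simp add: moment_def algebra_simps)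
  qed
  finally show ?thesis .
qed

lemma norm_moment_remainder_le:
  "norm (moment m t * iexp (- (t * v)) * (iexp (- (t * d)) - 1 - \<i> * of_real (- (t * d))))
    \<le> d\<^sup>2 / 2 * T ^ (m + 2) * norm (G t)"
proof (cases "T < \<bar>t\<bar>")
  case True then show ?thesis by (simp add: support moment_def)
next
  case False
  then have "t\<^sup>2 \<le> T\<^sup>2" using nonneg by (simp add: abs_le_square_iff[symmetric])
  have "norm (moment m t * iexp (- (t * v)) * (iexp (- (t * d)) - 1 - \<i> * of_real (- (t * d))))
      = norm (moment m t) * norm (iexp (- (t * d)) - 1 - \<i> * of_real (- (t * d)))"
    by (simp add: norm_mult)
  also have "\<dots> \<le> (T ^ m * norm (G t)) * ((- (t * d))\<^sup>2 / 2)"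
    using nonneg by (intro mult_mono norm_moment_le iexp_second_order) auto
  also have "\<dots> = T ^ m * norm (G t) * d\<^sup>2 / 2 * t\<^sup>2"
    by (simp add: power_mult_distrib)
  also have "\<dots> \<le> T ^ m * norm (G t) * d\<^sup>2 / 2 * T\<^sup>2"
    using \<open>t\<^sup>2 \<le> T\<^sup>2\<close> nonneg by (intro mult_left_mono) auto
  also have "\<dots> = d\<^sup>2 / 2 * T ^ (m + 2) * norm (G t)"
    by (simp add: power_add power2_eq_square algebra_simps)
  finally show ?thesis .
qed

lemma fourier_deriv_second_order:
  "norm (fourier_deriv m (v + d) - fourier_deriv m v - d *\<^sub>R fourier_deriv (Suc m) v)
    \<le> T ^ (m + 2) * L1_norm / 2 * d\<^sup>2"
proof -
  have "norm (fourier_deriv m (v + d) - fourier_deriv m v - d *\<^sub>R fourier_deriv (Suc m) v)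
      \<le> (\<integral>t. norm (moment m t * iexp (- (t * v)) * (iexp (- (t * d)) - 1 - \<i> * of_real (- (t * d))))
          \<partial>lborel)"
    unfolding fourier_deriv_remainder_eq by (rule integral_norm_bound)
  also have "\<dots> \<le> (\<integral>t. d\<^sup>2 / 2 * T ^ (m + 2) * norm (G t) \<partial>lborel)"
    by (rule integral_mono'[OF _ norm_moment_remainder_le]) (use integrable nonneg in auto)
  also have "\<dots> = T ^ (m + 2) * L1_norm / 2 * d\<^sup>2" by (simp add: L1_norm_def)
  finally show ?thesis .
qed

lemma has_vector_derivative_fourier_deriv:
  "(fourier_deriv m has_vector_derivative fourier_deriv (Suc m) v) (at v)"
  by (rule has_vector_derivative_if_second_order_bound[OF fourier_deriv_second_order])

lemma tendsto_fourier_deriv: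
  assumes L2: "integrable lborel (\<lambda>v. (norm (fourier_deriv 0 v))\<^sup>2)"
  shows "(fourier_deriv m \<longlongrightarrow> 0) at_top" and "(fourier_deriv m \<longlongrightarrow> 0) at_bot"
proof -
  note Lipschitz = Lipschitz_if_second_order_bound[OF fourier_deriv_second_order norm_fourier_deriv_le]
  have shift_top: "filterlim (\<lambda>v. v + d) at_top (at_top :: real filter)" for d
    using filterlim_tendsto_add_at_top[OF tendsto_const filterlim_ident, of d]
    by (simp add: add.commute)
  have shift_bot: "filterlim (\<lambda>v. v + d) at_bot (at_bot :: real filter)" for d
    using filterlim_tendsto_add_at_bot_iff[OF tendsto_const, of d "\<lambda>v. v"]
    by (simp add: add.commute filterlim_ident)
  have "(fourier_deriv m \<longlongrightarrow> 0) at_top \<and> (fourier_deriv m \<longlongrightarrow> 0) at_bot"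
  proof (induction m)
    case 0
    show ?case
      using tendsto_zero_at_top_if_square_integrable_Lipschitz[OF L2 Lipschitz]
        tendsto_zero_at_bot_if_square_integrable_Lipschitz[OF L2 Lipschitz] by blast
  next
    case (Suc m)
    then show ?case
      using tendsto_zero_derivative_if_second_order_bound[OF _ shift_top fourier_deriv_second_order]
        tendsto_zero_derivative_if_second_order_bound[OF _ shift_bot fourier_deriv_second_order]
      by blast
  qed
  then show "(fourier_deriv m \<longlongrightarrow> 0) at_top" and "(fourier_deriv m \<longlongrightarrow> 0) at_bot"
    by blast+
qed

lemma has_vector_derivative_powr_fourier_deriv:
  assumes x: "x > 0"
  shows "((\<lambda>x. of_real (a * x powr p) * fourier_deriv m (ln x)) has_vector_derivative
    of_real (a * p * x powr (p - 1)) * fourier_deriv m (ln x)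
    + of_real (a * x powr (p - 1)) * fourier_deriv (Suc m) (ln x)) (at x)"
proof -
  have power: "((\<lambda>x. of_real (a * x powr p)) has_vector_derivative of_real (a * (p * x powr (p - 1)))) (at x)"
    by (intro has_vector_derivative_of_real derivative_eq_intros) (use x in auto)
  have "(ln has_vector_derivative (1 / x)) (at x)"
    using DERIV_ln[OF x] by (simp add: has_real_derivative_iff_has_vector_derivative divide_inverse)
  then have log: "((\<lambda>x. fourier_deriv m (ln x)) has_vector_derivative (1 / x) *\<^sub>R fourier_deriv (Suc m) (ln x)) (at x)"
    using vector_diff_chain_at[OF _ has_vector_derivative_fourier_deriv] by (simp add: o_def)
  have "x powr p * (1 / x) = x powr (p - 1)" using x by (simp add: powr_diff divide_inverse)
  then have "of_real (a * x powr p) * ((1 / x) *\<^sub>R fourier_deriv (Suc m) (ln x))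
      = of_real (a * x powr (p - 1)) * fourier_deriv (Suc m) (ln x)"
    by (metis (no_types, lifting) mult.assoc mult_scaleR_right of_real_mult scaleR_conv_of_real)
  then show ?thesis
    using has_vector_derivative_mult[OF power log] by (simp add: algebra_simps)
qed

text \<open>Finite sums of terms \<open>a x\<^sup>p \<Psi>\<^sub>m(ln x)\<close>: a class closed under differentiation on
  \<open>(0, \<infinity>)\<close>, which is how smoothness is obtained.\<close>

inductive powr_log_comb :: "(real \<Rightarrow> complex) \<Rightarrow> bool" where
  powr_log_comb_term: "powr_log_comb (\<lambda>x. of_real (a * x powr p) * fourier_deriv m (ln x))"
| powr_log_comb_add: "powr_log_comb \<phi> \<Longrightarrow> powr_log_comb \<psi> \<Longrightarrow> powr_log_comb (\<lambda>x. \<phi> x + \<psi> x)"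

lemma powr_log_comb_has_vector_derivative:
  assumes "powr_log_comb \<phi>"
  shows "\<exists>\<phi>'. powr_log_comb \<phi>' \<and> (\<forall>x>0. (\<phi> has_vector_derivative \<phi>' x) (at x))"
  using assms
proof (induction rule: powr_log_comb.induct)
  case (powr_log_comb_term a p m)
  have "powr_log_comb (\<lambda>x. of_real (a * p * x powr (p - 1)) * fourier_deriv m (ln x)
      + of_real (a * x powr (p - 1)) * fourier_deriv (Suc m) (ln x))"
    by (intro powr_log_comb.intros)
  then show ?case using has_vector_derivative_powr_fourier_deriv by blast
next
  case (powr_log_comb_add \<phi> \<psi>)
  then show ?case
    by (blast intro: powr_log_comb.powr_log_comb_add has_vector_derivative_add)
qed

lemma smooth_on_if_powr_log_comb:
  assumes comb: "powr_log_comb \<phi>" and eq: "\<And>x. x > 0 \<Longrightarrow> h x = \<phi> x"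
  shows "smooth_on {0<..} h"
proof -
  have "\<exists>\<phi>. powr_log_comb \<phi> \<and> (\<forall>x>0. higher_vderiv k h x = \<phi> x)" for k
  proof (induction k)
    case 0
    show ?case using comb eq by (auto simp: higher_vderiv_def)
  next
    case (Suc k)
    then obtain \<phi> \<phi>' where "powr_log_comb \<phi>'" and eq: "\<forall>x>0. higher_vderiv k h x = \<phi> x"
      and deriv: "\<forall>x>0. (\<phi> has_vector_derivative \<phi>' x) (at x)"
      using powr_log_comb_has_vector_derivative by blast
    moreover have "higher_vderiv (Suc k) h x = \<phi>' x" if "x > 0" for x
    proof -
      have "(higher_vderiv k h has_vector_derivative \<phi>' x) (at x)"
        using has_vector_derivative_transform_within_open[OF deriv[rule_format, OF that] open_greaterThan, of 0]
          that eq by auto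
      then show ?thesis by (simp add: higher_vderiv_def vector_derivative_at)
    qed
    ultimately show ?case by blast
  qed
  then show ?thesis
    unfolding smooth_on_def
  proof (intro allI ballI)
    fix k and x :: real assume "x \<in> {0<..}"
    assume "\<And>k. \<exists>\<phi>. powr_log_comb \<phi> \<and> (\<forall>x>0. higher_vderiv k h x = \<phi> x)"
    then obtain \<phi> \<phi>' where eq: "\<forall>x>0. higher_vderiv k h x = \<phi> x"
      and deriv: "\<forall>x>0. (\<phi> has_vector_derivative \<phi>' x) (at x)"
      using powr_log_comb_has_vector_derivative by blast
    have "(higher_vderiv k h has_vector_derivative \<phi>' x) (at x)"
      using has_vector_derivative_transform_within_open[OF deriv[rule_format] open_greaterThan, of x 0]
        \<open>x \<in> {0<..}\<close> eq by auto
    then show "higher_vderiv k h differentiable at x" by (rule differentiableI_vector)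
  qed
qed

lemma mellin_deriv_powr_fourier_deriv:
  assumes h: "\<And>x. x > 0 \<Longrightarrow> h x = of_real (a * x powr (- c)) * fourier_deriv 0 (ln x)"
    and x: "x > 0"
  shows "(mellin_deriv c ^^ k) h x = of_real (a * x powr (- c)) * fourier_deriv k (ln x)"
  using x
proof (induction k arbitrary: x)
  case 0
  then show ?case by (simp add: h)
next
  case (Suc k)
  let ?D = "of_real (a * - c * x powr (- c - 1)) * fourier_deriv k (ln x)
    + of_real (a * x powr (- c - 1)) * fourier_deriv (Suc k) (ln x)"
  have "((mellin_deriv c ^^ k) h has_vector_derivative ?D) (at x)"
    using has_vector_derivative_transform_within_open[OF
        has_vector_derivative_powr_fourier_deriv[OF Suc.prems, of a "- c" k] open_greaterThan, of 0]
      Suc by auto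
  then have "vector_derivative ((mellin_deriv c ^^ k) h) (at x) = ?D"
    by (rule vector_derivative_at)
  then have "(mellin_deriv c ^^ Suc k) h x
      = of_real x * ?D + of_real c * (of_real (a * x powr (- c)) * fourier_deriv k (ln x))"
    using Suc.IH[OF Suc.prems] by (simp add: mellin_deriv_def[of c "(mellin_deriv c ^^ k) h"])
  also have "\<dots> = of_real (a * x powr (- c)) * fourier_deriv (Suc k) (ln x)"
  proof -
    have "x * x powr (- c - 1) = x powr (- c)"
      using Suc.prems by (simp add: powr_diff powr_minus field_simps)
    then have "complex_of_real (x powr (- c)) = of_real x * of_real (x powr (- c - 1))"
      by (metis of_real_mult)
    then show ?thesis by (simp add: algebra_simps)
  qed
  finally show ?case .
qed

lemma tendsto_powr_mellin_deriv:
  assumes L2: "integrable lborel (\<lambda>v. (norm (fourier_deriv 0 v))\<^sup>2)"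
    and h: "\<And>x. x > 0 \<Longrightarrow> h x = of_real (a * x powr (- c)) * fourier_deriv 0 (ln x)"
  shows "((\<lambda>x. of_real (x powr c) * (mellin_deriv c ^^ k) h x) \<longlongrightarrow> 0) (at_right 0)"
    and "((\<lambda>x. of_real (x powr c) * (mellin_deriv c ^^ k) h x) \<longlongrightarrow> 0) at_top"
proof -
  have eq: "of_real (x powr c) * (mellin_deriv c ^^ k) h x = a * fourier_deriv k (ln x)" if "x > 0" for x
  proof -
    have "complex_of_real (x powr c) * complex_of_real (x powr (- c)) = 1"
      using that by (simp add: powr_minus flip: of_real_mult)
    then show ?thesis
      using that by (simp add: mellin_deriv_powr_fourier_deriv[OF h] mult.left_commute mult.assoc)
  qed
  have "((\<lambda>x. a * fourier_deriv k (ln x)) \<longlongrightarrow> 0) (at_right 0)"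
    using tendsto_mult_right_zero[OF filterlim_compose[OF tendsto_fourier_deriv(2)[OF L2] ln_at_0]] .
  then show "((\<lambda>x. of_real (x powr c) * (mellin_deriv c ^^ k) h x) \<longlongrightarrow> 0) (at_right 0)"
    by (rule Lim_transform_eventually)
      (use eventually_at_right_less[of 0] in \<open>eventually_elim, simp add: eq\<close>)
  have "((\<lambda>x. a * fourier_deriv k (ln x)) \<longlongrightarrow> 0) at_top"
    using tendsto_mult_right_zero[OF filterlim_compose[OF tendsto_fourier_deriv(1)[OF L2] ln_at_top]] .
  then show "((\<lambda>x. of_real (x powr c) * (mellin_deriv c ^^ k) h x) \<longlongrightarrow> 0) at_top"
    by (rule Lim_transform_eventually)
      (use eventually_gt_at_top[of "0::real"] in \<open>eventually_elim, simp add: eq\<close>)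
qed

end

section \<open>Mellin band-limited functions\<close>

locale mellin_band_limited =
  fixes c T :: real and f g :: "real \<Rightarrow> complex"
  assumes X2: "X2 c f" and continuous: "continuous_on {0<..} f"
    and mellin: "is_mellin_L2 c f g" and band_limited: "AE t in lborel. \<bar>t\<bar> > T \<longrightarrow> g t = 0"
    and T_pos: "T > 0"
begin

text \<open>\<open>g\<close> vanishes outside \<open>[-T, T]\<close> only almost everywhere; \<open>G\<close> is the representative
  that vanishes there everywhere.\<close>

definition G :: "real \<Rightarrow> complex" where
  "G t = g t * indicator {-T..T} t"

text \<open>In the variable \<open>v = ln x\<close> the Mellin transform of \<open>f\<close> at \<open>c + it\<close> becomes the Fourier
  transform of \<open>F\<close>, and \<open>f \<in> X\<^sup>2\<^sub>c\<close> becomes \<open>F \<in> L\<^sup>2(\<real>)\<close>.\<close>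

definition F :: "real \<Rightarrow> complex" where
  "F v = of_real (exp (c * v)) * f (exp v)"

lemma measurable_g [measurable]: "g \<in> borel_measurable borel"
  using mellin unfolding is_mellin_L2_def by simp

lemma square_integrable_g: "integrable lborel (\<lambda>t. (norm (g t))\<^sup>2)"
  using mellin unfolding is_mellin_L2_def by simp

lemma AE_g_eq_G: "AE t in lborel. g t = G t"
  using band_limited by eventually_elim (auto simp: G_def indicator_def)

lemma integrable_G: "integrable lborel G"
proof (rule Bochner_Integration.integrable_bound[of _ "\<lambda>t. indicator {-T..T} t * (1 + (norm (g t))\<^sup>2)"])
  have "integrable lborel (\<lambda>t. indicator {-T..T} t + (norm (g t))\<^sup>2 * indicator {-T..T} t)"
    using square_integrable_g
    by (intro Bochner_Integration.integrable_add integrable_real_mult_indicator integrable_real_indicator)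
       (auto simp: emeasure_lborel_Icc_eq)
  then show "integrable lborel (\<lambda>t. indicator {-T..T} t * (1 + (norm (g t))\<^sup>2))"
    by (simp add: algebra_simps)
  have "norm (g t) \<le> 1 + (norm (g t))\<^sup>2" for t
  proof -
    have "2 * norm (g t) \<le> (norm (g t))\<^sup>2 + 1" using sum_squares_bound[of "norm (g t)" 1] by simp
    then show ?thesis using norm_ge_zero[of "g t"] by linarith
  qed
  then show "AE t in lborel. norm (G t) \<le> norm (indicator {-T..T} t * (1 + (norm (g t))\<^sup>2))"
    by (auto simp: G_def indicator_def)
qed (unfold G_def, measurable)

sublocale compactly_supported_integrable G T
  using integrable_G T_pos by unfold_locales (auto simp: G_def indicator_def)

lemma continuous_F: "continuous_on UNIV F"
  unfolding F_def by (intro continuous_intros continuous_on_compose2[OF continuous]) auto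

lemma measurable_F [measurable]: "F \<in> borel_measurable borel"
  using continuous_F by (rule borel_measurable_continuous_onI)

lemma set_integrable_norm_F_ln:
  "set_integrable lborel {0<..} (\<lambda>x. (norm (F (ln x)))\<^sup>2 * (1 / x))"
proof -
  define w where "w u = (norm (f u))\<^sup>2 * u powr (2 * c - 1)" for u
  have "continuous_on {0<..} w"
    unfolding w_def by (intro continuous_intros continuous_on_norm continuous) auto
  then have "(\<lambda>x. indicator {0<..} x * w x) \<in> borel_measurable borel"
    using borel_measurable_continuous_on_indicator[of "{0<..}" w] by simp
  moreover have "set_integrable lebesgue {0<..} w"
    using X2 unfolding X2_def w_def by simp
  ultimately have w_int: "set_integrable lborel {0<..} w"
    unfolding set_integrable_def by (subst (asm) integrable_completion) auto
  have "w x = (norm (F (ln x)))\<^sup>2 * (1 / x)" if x: "x \<in> {0<..}" for x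
  proof -
    have "(norm (F (ln x)))\<^sup>2 * (1 / x) = (exp (c * ln x))\<^sup>2 * (norm (f x))\<^sup>2 / x"
      using x by (simp add: F_def norm_mult power_mult_distrib)
    also have "(exp (c * ln x))\<^sup>2 = x powr (2 * c)"
      using x by (simp add: powr_def exp_double[symmetric] power2_eq_square exp_add[symmetric] algebra_simps)
    also have "x powr (2 * c) * (norm (f x))\<^sup>2 / x = w x"
      using x by (simp add: w_def powr_diff)
    finally show ?thesis by simp
  qed
  then show ?thesis
    by (rule set_integrable_cong[THEN iffD1, OF refl refl _ w_int])
qed

lemma square_integrable_F: "integrable lborel (\<lambda>v. (norm (F v))\<^sup>2)"
proof -
  have substituted: "set_integrable lborel (einterval 0 \<infinity>) (\<lambda>x. (norm (F (ln x)))\<^sup>2 * (1 / x))"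
    using set_integrable_norm_F_ln by (simp add: zero_ereal_def)
  have "set_integrable lborel (einterval (-\<infinity>) \<infinity>) (\<lambda>v. (norm (F v))\<^sup>2)"
  proof (rule interval_integral_substitution_nonneg(1)[of 0 \<infinity> ln "\<lambda>x. 1 / x"])
    show "set_integrable lborel (einterval 0 \<infinity>) (\<lambda>x. (norm (F (ln x)))\<^sup>2 * (1 / x))"
      by (rule substituted)
    show "((ereal \<circ> ln \<circ> real_of_ereal) \<longlongrightarrow> - \<infinity>) (at_right 0)"
      by (simp add: zero_ereal_def ereal_tendsto_simps ln_at_0)
    show "((ereal \<circ> ln \<circ> real_of_ereal) \<longlongrightarrow> \<infinity>) (at_left \<infinity>)"
      by (simp add: ereal_tendsto_simps ln_at_top)
    fix x :: real
    show "0 < ereal x \<Longrightarrow> ereal x < \<infinity> \<Longrightarrow> DERIV ln x :> 1 / x"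
      by (auto intro!: derivative_eq_intros simp: zero_ereal_def)
    show "0 < ereal x \<Longrightarrow> ereal x < \<infinity> \<Longrightarrow> isCont (\<lambda>v. (norm (F v))\<^sup>2) (ln x)"
      using continuous_F by (intro continuous_intros) (auto simp: continuous_on_eq_continuous_at)
    show "0 < ereal x \<Longrightarrow> ereal x < \<infinity> \<Longrightarrow> isCont (\<lambda>x. 1 / x) x"
      by (auto intro!: continuous_intros simp: zero_ereal_def)
    show "0 \<le> ereal x \<Longrightarrow> ereal x \<le> \<infinity> \<Longrightarrow> 0 \<le> 1 / x"
      by (simp add: zero_ereal_def)
  qed simp_all
  then show ?thesis by (simp add: set_integrable_def)
qed

definition trunc_fourier :: "real \<Rightarrow> real \<Rightarrow> complex" where
  "trunc_fourier L t = (\<integral>v. indicator {-L..L} v *\<^sub>R (F v * iexp (t * v)) \<partial>lborel)"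

lemma mellin_trunc_exp:
  assumes L: "L \<ge> 0"
  shows "mellin_trunc c f (exp L) t = trunc_fourier L t"
proof -
  define s where "s = complex_of_real c + \<i> * complex_of_real t - 1"
  define k where "k u = f u * (complex_of_real u) powr s" for u
  have powr_eq: "(complex_of_real u) powr s = exp (s * of_real (ln u))" if "u > 0" for u
    using that by (simp add: powr_def Ln_of_real)
  have "continuous_on {0<..} (\<lambda>u. f u * exp (s * of_real (ln u)))"
    by (intro continuous_intros continuous) auto
  then have "continuous_on {0<..} k"
    by (rule continuous_on_cong[THEN iffD1, rotated 2]) (auto simp: k_def powr_eq)
  have "mellin_trunc c f (exp L) t = (LBINT u=exp (-L)..exp L. k u)"
    unfolding mellin_trunc_def k_def s_def by (simp add: exp_minus divide_inverse)
  also have "\<dots> = (LBINT v=-L..L. exp v *\<^sub>R k (exp v))"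
  proof (rule interval_integral_substitution_finite[symmetric])
    show "continuous_on (exp ` {-L..L}) k"
      by (rule continuous_on_subset[OF \<open>continuous_on {0<..} k\<close>]) auto
    show "(exp has_real_derivative exp v) (at v within {-L..L})" for v
      by (auto intro!: derivative_eq_intros)
  qed (use L in \<open>auto intro: continuous_intros\<close>)
  also have "\<dots> = (LBINT v:{-L..L}. exp v *\<^sub>R k (exp v))"
    using L by (simp add: interval_integral_Icc)
  also have "\<dots> = trunc_fourier L t"
    unfolding set_lebesgue_integral_def trunc_fourier_def
  proof (rule Bochner_Integration.integral_cong[OF refl])
    fix v :: real
    have "exp v *\<^sub>R k (exp v) = f (exp v) * (exp (complex_of_real v) * exp (s * complex_of_real v))"
      by (simp add: k_def powr_eq scaleR_conv_of_real exp_of_real algebra_simps)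
    also have "exp (complex_of_real v) * exp (s * complex_of_real v) = exp (of_real (c * v)) * iexp (t * v)"
      unfolding exp_add[symmetric] s_def by (simp add: algebra_simps)
    also have "exp (of_real (c * v)) = complex_of_real (exp (c * v))"
      by (rule exp_of_real)
    finally have "exp v *\<^sub>R k (exp v) = F v * iexp (t * v)"
      by (simp add: F_def algebra_simps)
    then show "indicator {-L..L} v *\<^sub>R exp v *\<^sub>R k (exp v) = indicator {-L..L} v *\<^sub>R (F v * iexp (t * v))"
      by simp
  qed
  finally show ?thesis .
qed

text \<open>Fubini, with the Fourier transform of the Gaussian computed in the inner integral.\<close>

lemma integral_trunc_fourier_gauss_wave:
  assumes e: "e > 0"
  shows "integrable lborel (\<lambda>t. trunc_fourier L t * gauss_wave e v0 t)"
    and "(\<integral>t. trunc_fourier L t * gauss_wave e v0 t \<partial>lborel)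
      = (\<integral>v. indicator {-L..L} v *\<^sub>R (F v * of_real (2 * pi * normal_density v0 e v)) \<partial>lborel)"
proof -
  have ps: "pair_sigma_finite (lborel :: real measure) lborel"
    by (simp add: pair_sigma_finite_def lborel.sigma_finite_measure_axioms)
  define H where "H t v = indicator {-L..L} v *\<^sub>R (F v * iexp (t * v)) * gauss_wave e v0 t" for t v :: real
  have [measurable]: "(\<lambda>(t, v). H t v) \<in> borel_measurable (lborel \<Otimes>\<^sub>M lborel)"
    unfolding H_def by measurable
  have F_int: "integrable lborel (\<lambda>v. indicator {-L..L} v *\<^sub>R F v)"
    using borel_integrable_atLeastAtMost'[OF continuous_on_subset[OF continuous_F]]
    unfolding set_integrable_def by auto
  define CF where "CF = (\<integral>v. norm (indicator {-L..L} v *\<^sub>R F v) \<partial>lborel)"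
  have norm_H: "norm (H t v) = norm (indicator {-L..L} v *\<^sub>R F v) * exp (- ((e * t)\<^sup>2) / 2)" for t v
    by (simp add: H_def norm_gauss_wave norm_mult)
  have H_int: "integrable (lborel \<Otimes>\<^sub>M lborel) (\<lambda>(t, v). H t v)"
  proof (rule pair_sigma_finite.Fubini_integrable[OF ps])
    show "integrable lborel (\<lambda>t. \<integral>v. norm (case (t, v) of (t, v) \<Rightarrow> H t v) \<partial>lborel)"
      using integrable_gaussian[of e] e by (simp add: norm_H CF_def[symmetric])
    show "AE t in lborel. integrable lborel (\<lambda>v. case (t, v) of (t, v) \<Rightarrow> H t v)"
    proof (rule AE_I2, rule Bochner_Integration.integrable_bound[OF F_int[THEN integrable_norm]])
      show "AE v in lborel. norm (case (t, v) of (t, v) \<Rightarrow> H t v) \<le> norm (norm (indicator {-L..L} v *\<^sub>R F v))" for t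
        by (intro AE_I2) (auto simp: norm_H intro!: mult_left_le)
    qed (simp add: H_def)
  qed measurable
  have inner_v: "(\<integral>v. H t v \<partial>lborel) = trunc_fourier L t * gauss_wave e v0 t" for t
    unfolding H_def trunc_fourier_def by (rule integral_mult_left_zero)
  have inner_t: "(\<integral>t. H t v \<partial>lborel) = indicator {-L..L} v *\<^sub>R (F v * of_real (2 * pi * normal_density v0 e v))" for v
  proof -
    have "(\<integral>t. H t v \<partial>lborel) = indicator {-L..L} v *\<^sub>R (F v * (\<integral>t. iexp (t * v) * gauss_wave e v0 t \<partial>lborel))"
      unfolding H_def by (simp add: mult.assoc)
    also have "\<dots> = indicator {-L..L} v *\<^sub>R (F v * of_real (2 * pi * normal_density v0 e v))"
      by (simp only: integral_iexp_gauss_wave[OF e])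
    finally show ?thesis .
  qed
  show "integrable lborel (\<lambda>t. trunc_fourier L t * gauss_wave e v0 t)"
    using pair_sigma_finite.integrable_fst[OF ps H_int] by (simp add: inner_v)
  have "(\<integral>v. (\<integral>t. H t v \<partial>lborel) \<partial>lborel) = (\<integral>t. (\<integral>v. H t v \<partial>lborel) \<partial>lborel)"
    using H_int by (intro pair_sigma_finite.Fubini_integral[OF ps]) simp
  then show "(\<integral>t. trunc_fourier L t * gauss_wave e v0 t \<partial>lborel)
      = (\<integral>v. indicator {-L..L} v *\<^sub>R (F v * of_real (2 * pi * normal_density v0 e v)) \<partial>lborel)"
    by (simp add: inner_v inner_t)
qed

lemma measurable_trunc_fourier [measurable]: "trunc_fourier L \<in> borel_measurable borel"
proof -
  \<comment> \<open>Divide the integrable, hence measurable, product by the nowhere vanishing \<open>gauss_wave 1 0\<close>.\<close>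
  have "(\<lambda>t. trunc_fourier L t * gauss_wave 1 0 t) \<in> borel_measurable borel"
    using integral_trunc_fourier_gauss_wave(1)[of 1 L 0] by (simp add: borel_measurable_integrable)
  then have "(\<lambda>t. trunc_fourier L t * gauss_wave 1 0 t / gauss_wave 1 0 t) \<in> borel_measurable borel"
    by measurable
  moreover have "gauss_wave 1 0 t \<noteq> 0" for t
    by (simp add: gauss_wave_def)
  ultimately show ?thesis by simp
qed

lemma integrable_G_gauss_wave: "integrable lborel (\<lambda>t. G t * gauss_wave e v0 t)"
  by (rule Bochner_Integration.integrable_bound[OF integrable_G[THEN integrable_norm]])
     (auto simp: norm_mult norm_gauss_wave intro!: mult_left_le)

lemma integral_g_gauss_wave_eq_G:
  "integrable lborel (\<lambda>t. g t * gauss_wave e v0 t)"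
  "(\<integral>t. g t * gauss_wave e v0 t \<partial>lborel) = (\<integral>t. G t * gauss_wave e v0 t \<partial>lborel)"
proof -
  have "AE t in lborel. G t * gauss_wave e v0 t = g t * gauss_wave e v0 t"
    using AE_g_eq_G by eventually_elim simp
  then show "integrable lborel (\<lambda>t. g t * gauss_wave e v0 t)"
    by (intro integrable_cong_AE_imp[OF integrable_G_gauss_wave]) auto
  show "(\<integral>t. g t * gauss_wave e v0 t \<partial>lborel) = (\<integral>t. G t * gauss_wave e v0 t \<partial>lborel)"
    using AE_g_eq_G by (intro integral_cong_AE) auto
qed

lemma integral_g_gauss_wave:
  assumes e: "e > 0"
  shows "(\<integral>t. g t * gauss_wave e v0 t \<partial>lborel)
    = of_real (2 * pi) * (\<integral>v. F v * of_real (normal_density v0 e v) \<partial>lborel)"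
proof (rule tendsto_unique[OF trivial_limit_at_top_linorder])
  have "((\<lambda>L. \<integral>\<^sup>+t. ennreal ((norm (mellin_trunc c f (exp L) t - g t))\<^sup>2) \<partial>lborel) \<longlongrightarrow> 0) at_top"
    using filterlim_compose[OF mellin[unfolded is_mellin_L2_def, THEN conjunct2, THEN conjunct2] exp_at_top]
    by (simp add: o_def)
  then have "((\<lambda>L. \<integral>\<^sup>+t. ennreal ((norm (trunc_fourier L t - g t))\<^sup>2) \<partial>lborel) \<longlongrightarrow> 0) at_top"
    by (rule Lim_transform_eventually)
      (use eventually_ge_at_top[of "0::real"] in \<open>eventually_elim, simp add: mellin_trunc_exp\<close>)
  then show "((\<lambda>L. \<integral>t. trunc_fourier L t * gauss_wave e v0 t \<partial>lborel)
      \<longlongrightarrow> (\<integral>t. g t * gauss_wave e v0 t \<partial>lborel)) at_top"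
    by (rule tendsto_integral_mult_if_L2_convergence)
       (use e square_integrable_gauss_wave integral_trunc_fourier_gauss_wave(1) integral_g_gauss_wave_eq_G(1)
         in auto)
  let ?w = "\<lambda>v. F v * of_real (2 * pi * normal_density v0 e v)"
  have "((\<lambda>L. \<integral>v. indicator {-L..L} v *\<^sub>R ?w v \<partial>lborel) \<longlongrightarrow> (\<integral>v. ?w v \<partial>lborel)) at_top"
  proof (rule integral_dominated_convergence_at_top[where w="\<lambda>v. norm (?w v)"])
    have "integrable lborel (\<lambda>v. of_real (2 * pi) * (F v * of_real (normal_density v0 e v)))"
      using integrable_mult_normal_density[OF measurable_F square_integrable_F e]
      by (rule integrable_mult_right)
    then show "integrable lborel (\<lambda>v. norm (?w v))"
      by (simp add: algebra_simps)
    show "AE v in lborel. ((\<lambda>L. indicator {-L..L} v *\<^sub>R ?w v) \<longlongrightarrow> ?w v) at_top"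
    proof (rule AE_I2, rule tendsto_eventually)
      show "\<forall>\<^sub>F L in at_top. indicator {-L..L} v *\<^sub>R ?w v = ?w v" for v :: real
        using eventually_ge_at_top[of "\<bar>v\<bar>"] by eventually_elim (auto simp: indicator_def)
    qed
    show "\<forall>\<^sub>F L in at_top. AE v in lborel. norm (indicator {-L..L} v *\<^sub>R ?w v) \<le> norm (?w v)"
      by (intro always_eventually allI AE_I2) (auto simp: indicator_def)
  qed measurable
  then show "((\<lambda>L. \<integral>t. trunc_fourier L t * gauss_wave e v0 t \<partial>lborel)
      \<longlongrightarrow> of_real (2 * pi) * (\<integral>v. F v * of_real (normal_density v0 e v) \<partial>lborel)) at_top"
    unfolding integral_trunc_fourier_gauss_wave(2)[OF e] by (simp add: algebra_simps)
qed

lemma tendsto_integral_g_gauss_wave: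
  "((\<lambda>e. \<integral>t. g t * gauss_wave e v0 t \<partial>lborel) \<longlongrightarrow> fourier_deriv 0 v0) (at_right 0)"
proof -
  have "((\<lambda>s. \<integral>t. G t * gauss_wave (inverse s) v0 t \<partial>lborel) \<longlongrightarrow> fourier_deriv 0 v0) at_top"
    unfolding fourier_deriv_def moment_def power_0 mult_1
  proof (rule integral_dominated_convergence_at_top[where w="\<lambda>t. norm (G t)"])
    show "AE t in lborel. ((\<lambda>s. G t * gauss_wave (inverse s) v0 t) \<longlongrightarrow> G t * iexp (- (t * v0))) at_top"
    proof (rule AE_I2)
      fix t :: real
      have "((\<lambda>s. G t * (iexp (- (t * v0)) * of_real (exp (- ((inverse s * t)\<^sup>2) / 2)))) \<longlongrightarrow>
                  G t * (iexp (- (t * v0)) * of_real (exp (- ((0 * t)\<^sup>2) / 2)))) at_top"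
        by (intro tendsto_intros tendsto_inverse_0_at_top filterlim_ident) simp_all
      then show "((\<lambda>s. G t * gauss_wave (inverse s) v0 t) \<longlongrightarrow> G t * iexp (- (t * v0))) at_top"
        by (simp add: gauss_wave_def)
    qed
    show "\<forall>\<^sub>F s in at_top. AE t in lborel. norm (G t * gauss_wave (inverse s) v0 t) \<le> norm (G t)"
      by (intro always_eventually allI AE_I2) (auto simp: norm_mult norm_gauss_wave intro!: mult_left_le)
  qed (use integrable_G in auto)
  then have "((\<lambda>e. \<integral>t. G t * gauss_wave e v0 t \<partial>lborel) \<longlongrightarrow> fourier_deriv 0 v0) (at_right 0)"
    by (simp add: at_right_to_top filterlim_filtermap)
  then show ?thesis by (simp add: integral_g_gauss_wave_eq_G(2))
qed

text \<open>Fourier inversion: both sides are the limit of the Gaussian-damped pairing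
  \<open>\<integral> g(t) exp (- i t v\<^sub>0 - (\<epsilon> t)\<^sup>2 / 2) dt\<close> as \<open>\<epsilon> \<rightarrow> 0\<close>.\<close>

lemma fourier_inversion: "F v0 = fourier_deriv 0 v0 / (2 * pi)"
proof -
  have "((\<lambda>e. of_real (2 * pi) * (\<integral>v. F v * of_real (normal_density v0 e v) \<partial>lborel))
      \<longlongrightarrow> of_real (2 * pi) * F v0) (at_right 0)"
    using continuous_F
    by (intro tendsto_intros tendsto_normal_density_average measurable_F square_integrable_F)
       (simp add: continuous_on_eq_continuous_at)
  then have "((\<lambda>e. \<integral>t. g t * gauss_wave e v0 t \<partial>lborel) \<longlongrightarrow> of_real (2 * pi) * F v0) (at_right 0)"
    by (rule Lim_transform_eventually)
      (use eventually_at_right_less[of 0] in \<open>eventually_elim, simp add: integral_g_gauss_wave\<close>)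
  from tendsto_unique[OF trivial_limit_at_right_real this tendsto_integral_g_gauss_wave]
  show ?thesis by (simp add: field_simps)
qed

lemma f_eq_powr_fourier_deriv:
  assumes "x > 0"
  shows "f x = of_real (1 / (2 * pi) * x powr (- c)) * fourier_deriv 0 (ln x)"
proof -
  have "of_real (x powr c) * f x = fourier_deriv 0 (ln x) / (2 * pi)"
    using fourier_inversion[of "ln x"] assms by (simp add: F_def powr_def mult.commute)
  then show ?thesis
    using assms by (simp add: powr_minus field_simps)
qed

lemma square_integrable_fourier_deriv: "integrable lborel (\<lambda>v. (norm (fourier_deriv 0 v))\<^sup>2)"
proof -
  have "(norm (fourier_deriv 0 v))\<^sup>2 = (2 * pi)\<^sup>2 * (norm (F v))\<^sup>2" for v
    by (simp add: fourier_inversion norm_divide power_divide)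
  then show ?thesis using square_integrable_F by simp
qed

end

theorem theorem1:
  fixes c T :: real and f :: "real \<Rightarrow> complex"
  assumes "T > 0" and "B2 c T f"
  shows "smooth_on {0<..} f \<and>
    (\<forall>k::nat.
      ((\<lambda>x. complex_of_real (x powr c) * (mellin_deriv c ^^ k) f x) \<longlongrightarrow> 0) (at_right 0) \<and>
      ((\<lambda>x. complex_of_real (x powr c) * (mellin_deriv c ^^ k) f x) \<longlongrightarrow> 0) at_top)"
proof -
  from assms(2) obtain g where "X2 c f" "continuous_on {0<..} f"
    and "is_mellin_L2 c f g" "AE t in lborel. \<bar>t\<bar> > T \<longrightarrow> g t = 0"
    unfolding B2_def by blast
  then interpret mellin_band_limited c T f g
    using assms(1) by unfold_locales
  show ?thesis
    using smooth_on_if_powr_log_comb[OF powr_log_comb_term f_eq_powr_fourier_deriv]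
      tendsto_powr_mellin_deriv[OF square_integrable_fourier_deriv f_eq_powr_fourier_deriv]
    by blast
qed

end
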